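(* Let $G$ be a finitely generated group and let $E$ be a finite right zero semigroup. Then $|\Omega(G\times E)|=|\Omega G|$.
   Context: A right zero semigroup is a semigroup $E$ with $ef=f$ for all $e,f\in E$; $G\times E$ is the direct product semigroup. A digraph on $\Omega$ is a subset $\Gamma\subseteq\Omega\times\Omega$. A path is a sequence of pairwise distinct vertices $(v_0,v_1,\ldots)$ with $(v_i,v_{i+1})\in\Gamma$ (length 0 allowed); a ray is an infinite path; an anti-ray is an infinite sequence of distinct vertices with $(v_{i+1},v_i)\in\Gamma$. For infinite $\Sigma',\Sigma\subseteq\Omega$, $\Sigma'\preccurlyeq\Sigma$ means there are infinitely many pairwise vertex-disjoint paths from vertices of $\Sigma'$ to vertices of $\Sigma$. On rays and anti-rays $\preccurlyeq$ is a preorder with associated equivalence $\approx$; the ends are the $\approx$-classes of rays and anti-rays, and $\Omega\Gamma$ denotes the poset of ends. The right Cayley graph $\Gamma_r(S,A)$ has vertex set $S$ and edges $(x,xa)$, $x\in S$, $a\in A$. For a finitely generated semigroup $S$ (in particular a finitely generated group regarded as a semigroup), $\Omega S:=\Omega\Gamma_r(S,A)$ for any finite semigroup generating set $A$ (well defined up to isomorphism). *)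

theory Defs
  imports "HOL-Algebra.Generated_Groups" "HOL-Library.Equipollence"
begin

definition fin_path :: "('a \<times> 'a) set \<Rightarrow> 'a list \<Rightarrow> bool" where
  "fin_path \<Gamma> p \<longleftrightarrow> p \<noteq> [] \<and> distinct p \<and>
     (\<forall>i. Suc i < length p \<longrightarrow> (p ! i, p ! Suc i) \<in> \<Gamma>)"

definition is_ray :: "('a \<times> 'a) set \<Rightarrow> (nat \<Rightarrow> 'a) \<Rightarrow> bool" where
  "is_ray \<Gamma> r \<longleftrightarrow> inj r \<and> (\<forall>i. (r i, r (Suc i)) \<in> \<Gamma>)"

definition is_antiray :: "('a \<times> 'a) set \<Rightarrow> (nat \<Rightarrow> 'a) \<Rightarrow> bool" where
  "is_antiray \<Gamma> r \<longleftrightarrow> inj r \<and> (\<forall>i. (r (Suc i), r i) \<in> \<Gamma>)"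

definition reach_le :: "('a \<times> 'a) set \<Rightarrow> 'a set \<Rightarrow> 'a set \<Rightarrow> bool" where
  "reach_le \<Gamma> \<Sigma>' \<Sigma> \<longleftrightarrow> (\<exists>P :: 'a list set. infinite P \<and>
     (\<forall>p\<in>P. fin_path \<Gamma> p \<and> hd p \<in> \<Sigma>' \<and> last p \<in> \<Sigma>) \<and>
     (\<forall>p\<in>P. \<forall>q\<in>P. p \<noteq> q \<longrightarrow> set p \<inter> set q = {}))"

definition rays_antirays :: "('a \<times> 'a) set \<Rightarrow> (nat \<Rightarrow> 'a) set" where
  "rays_antirays \<Gamma> = {r. is_ray \<Gamma> r \<or> is_antiray \<Gamma> r}"

definition end_equiv :: "('a \<times> 'a) set \<Rightarrow> ((nat \<Rightarrow> 'a) \<times> (nat \<Rightarrow> 'a)) set" where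
  "end_equiv \<Gamma> = {(r, s). r \<in> rays_antirays \<Gamma> \<and> s \<in> rays_antirays \<Gamma> \<and>
       reach_le \<Gamma> (range r) (range s) \<and> reach_le \<Gamma> (range s) (range r)}"

text \<open>The set of ends (underlying set of the poset \<open>\<Omega>\<Gamma>\<close>).\<close>

definition ends :: "('a \<times> 'a) set \<Rightarrow> (nat \<Rightarrow> 'a) set set" where
  "ends \<Gamma> = rays_antirays \<Gamma> // end_equiv \<Gamma>"

inductive_set sg_gen :: "('a \<Rightarrow> 'a \<Rightarrow> 'a) \<Rightarrow> 'a set \<Rightarrow> 'a set"
  for m :: "'a \<Rightarrow> 'a \<Rightarrow> 'a" and A :: "'a set" where
  base: "a \<in> A \<Longrightarrow> a \<in> sg_gen m A"
| step: "x \<in> sg_gen m A \<Longrightarrow> y \<in> sg_gen m A \<Longrightarrow> m x y \<in> sg_gen m A"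

definition sg_generating_set :: "'a set \<Rightarrow> ('a \<Rightarrow> 'a \<Rightarrow> 'a) \<Rightarrow> 'a set \<Rightarrow> bool" where
  "sg_generating_set S m A \<longleftrightarrow> A \<subseteq> S \<and> sg_gen m A = S"

definition right_cayley :: "'a set \<Rightarrow> ('a \<Rightarrow> 'a \<Rightarrow> 'a) \<Rightarrow> 'a set \<Rightarrow> ('a \<times> 'a) set" where
  "right_cayley S m A = {(x, m x a) | x a. x \<in> S \<and> a \<in> A}"

definition prod_mult :: "('a \<Rightarrow> 'a \<Rightarrow> 'a) \<Rightarrow> ('e \<Rightarrow> 'e \<Rightarrow> 'e) \<Rightarrow> ('a \<times> 'e) \<Rightarrow> ('a \<times> 'e) \<Rightarrow> ('a \<times> 'e)" where
  "prod_mult m1 m2 x y = (m1 (fst x) (fst y), m2 (snd x) (snd y))"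

end

theory Submission
  imports Defs
begin

text \<open>
  Both Cayley graphs lie over \<open>G\<close>: that of \<open>G\<close> via the identity, that of \<open>G \<times> E\<close> via the
  projection to \<open>G\<close>, whose fibres \<open>{g} \<times> E\<close> are finite; and in both semigroups every element is a
  right multiple of every other. For such a semigroup \<open>S\<close> over \<open>G\<close>, walks in the Cayley graph of
  \<open>S\<close> project to walks in a Cayley graph of \<open>G\<close>, and conversely walks in a Cayley graph of \<open>G\<close>
  with respect to any finite set lift to walks in \<open>S\<close> that stay within bounded distance.
  Since infinitely many disjoint paths from \<open>X\<close> to \<open>Y\<close> exist iff some path avoids any given
  finite set, the preorder \<open>\<preceq>\<close> on rays and anti-rays of \<open>S\<close> depends only on their projections.
  These are coarse sequences in \<open>G\<close> (finitely many distinct steps, every element visited finitely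
  often), and every coarse sequence is equivalent to the projection of a ray. Hence the ends of
  \<open>S\<close> correspond bijectively to the classes of coarse sequences of \<open>G\<close>, which do not depend on \<open>S\<close>.
\<close>

section \<open>Walks and disjoint paths\<close>

inductive walk :: "('a \<times> 'a) set \<Rightarrow> 'a \<Rightarrow> 'a \<Rightarrow> 'a set \<Rightarrow> bool" for \<Gamma> where
  walk_refl: "walk \<Gamma> x x {x}"
| walk_step: "(x, y) \<in> \<Gamma> \<Longrightarrow> walk \<Gamma> y z W \<Longrightarrow> walk \<Gamma> x z (insert x W)"

lemma walk_endpoints: "walk \<Gamma> x y W \<Longrightarrow> x \<in> W \<and> y \<in> W"
  by (induction rule: walk.induct) auto

lemma walk_append: "walk \<Gamma> x y W1 \<Longrightarrow> walk \<Gamma> y z W2 \<Longrightarrow> walk \<Gamma> x z (W1 \<union> W2)"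
proof (induction arbitrary: z W2 rule: walk.induct)
  case (walk_refl x)
  then show ?case using walk_endpoints[OF walk_refl.prems] by (simp add: insert_absorb)
next
  case (walk_step x y z W)
  then show ?case using walk.walk_step by fastforce
qed

lemma walk_edge: "(x, y) \<in> \<Gamma> \<Longrightarrow> walk \<Gamma> x y {x, y}"
  using walk_step[OF _ walk_refl] .

lemma walk_map:
  assumes "walk \<Gamma> x y W" and "\<And>u v. (u, v) \<in> \<Gamma> \<Longrightarrow> (f u, f v) \<in> \<Gamma>'"
  shows "walk \<Gamma>' (f x) (f y) (f ` W)"
  using assms by (induction rule: walk.induct) (auto intro: walk.intros)

lemma walk_mono: "walk \<Gamma> x y W \<Longrightarrow> \<Gamma> \<subseteq> \<Gamma>' \<Longrightarrow> walk \<Gamma>' x y W"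
  by (induction rule: walk.induct) (auto intro: walk.intros)

lemma fin_path_Cons_Cons:
  "fin_path \<Gamma> (x # y # p) \<longleftrightarrow> x \<notin> set (y # p) \<and> (x, y) \<in> \<Gamma> \<and> fin_path \<Gamma> (y # p)"
  unfolding fin_path_def by (auto simp: nth_Cons' less_Suc_eq_0_disj)

lemma walk_of_fin_path: "fin_path \<Gamma> p \<Longrightarrow> walk \<Gamma> (hd p) (last p) (set p)"
proof (induction p rule: induct_list012)
  case 1 then show ?case by (simp add: fin_path_def)
next
  case (2 x) then show ?case by (simp add: walk_refl)
next
  case (3 x y p) then show ?case by (auto simp: fin_path_Cons_Cons intro: walk_step)
qed

lemma fin_path_of_walk:
  "walk \<Gamma> x y W \<Longrightarrow> \<exists>p. fin_path \<Gamma> p \<and> hd p = x \<and> last p = y \<and> set p \<subseteq> W"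
proof (induction rule: walk.induct)
  case (walk_refl x)
  show ?case by (rule exI[of _ "[x]"]) (simp add: fin_path_def)
next
  case (walk_step x y z W)
  then obtain p where p: "fin_path \<Gamma> p" "hd p = y" "last p = z" "set p \<subseteq> W" by blast
  then obtain q where q: "p = y # q" by (cases p) (auto simp: fin_path_def)
  show ?case
  proof (cases "x \<in> set p")
    case True
    then obtain i where i: "i < length p" "p ! i = x" by (metis in_set_conv_nth)
    have "fin_path \<Gamma> (drop i p)" using p(1) i(1) by (auto simp: fin_path_def)
    moreover have "set (drop i p) \<subseteq> insert x W" using p(4) set_drop_subset by fastforce
    ultimately show ?thesis using i p(3) by (intro exI[of _ "drop i p"]) (auto simp: hd_drop_conv_nth)
  next
    case False
    then have "fin_path \<Gamma> (x # p)" using p q walk_step.hyps by (simp add: fin_path_Cons_Cons)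
    then show ?thesis using p q by (intro exI[of _ "x # p"]) auto
  qed
qed

definition reach_avoiding :: "('a \<times> 'a) set \<Rightarrow> 'a set \<Rightarrow> 'a set \<Rightarrow> bool" where
  "reach_avoiding \<Gamma> X Y \<longleftrightarrow>
     (\<forall>F. finite F \<longrightarrow> (\<exists>x\<in>X. \<exists>y\<in>Y. \<exists>W. walk \<Gamma> x y W \<and> W \<inter> F = {}))"

lemma reach_le_imp_reach_avoiding:
  assumes "reach_le \<Gamma> X Y" shows "reach_avoiding \<Gamma> X Y"
  unfolding reach_avoiding_def
proof (intro allI impI)
  fix F :: "'a set" assume "finite F"
  obtain P where P: "infinite P" "\<forall>p\<in>P. fin_path \<Gamma> p \<and> hd p \<in> X \<and> last p \<in> Y"
    and disj: "\<forall>p\<in>P. \<forall>q\<in>P. p \<noteq> q \<longrightarrow> set p \<inter> set q = {}"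
    using assms unfolding reach_le_def by blast
  \<comment> \<open>Disjointness lets every vertex of \<open>F\<close> lie on at most one of the paths.\<close>
  have "finite {p \<in> P. f \<in> set p}" for f
  proof (cases "\<exists>p0\<in>P. f \<in> set p0")
    case True
    then obtain p0 where "p0 \<in> P" "f \<in> set p0" by blast
    then have "{p \<in> P. f \<in> set p} \<subseteq> {p0}" using disj by blast
    then show ?thesis by (rule finite_subset) simp
  next
    case False
    then have "{p \<in> P. f \<in> set p} = {}" by blast
    then show ?thesis by (simp only: finite.emptyI)
  qed
  then have "finite (\<Union>f\<in>F. {p \<in> P. f \<in> set p})"
    using \<open>finite F\<close> by (intro finite_UN_I)
  then have "infinite (P - (\<Union>f\<in>F. {p \<in> P. f \<in> set p}))"
    using P(1) by (rule Diff_infinite_finite)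
  then obtain p where "p \<in> P - (\<Union>f\<in>F. {p \<in> P. f \<in> set p})"
    using infinite_imp_nonempty by blast
  then have "p \<in> P" "set p \<inter> F = {}" by auto
  moreover have "walk \<Gamma> (hd p) (last p) (set p)" "hd p \<in> X" "last p \<in> Y"
    using P(2) \<open>p \<in> P\<close> walk_of_fin_path by auto
  ultimately show "\<exists>x\<in>X. \<exists>y\<in>Y. \<exists>W. walk \<Gamma> x y W \<and> W \<inter> F = {}"
    by blast
qed

lemma reach_avoiding_imp_reach_le:
  assumes "reach_avoiding \<Gamma> X Y" shows "reach_le \<Gamma> X Y"
proof -
  define good where "good F p \<longleftrightarrow> fin_path \<Gamma> p \<and> hd p \<in> X \<and> last p \<in> Y \<and> set p \<inter> F = {}"
    for F p
  have "\<exists>p. good F p" if "finite F" for F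
  proof -
    obtain x y W where xy: "x \<in> X" "y \<in> Y" and W: "walk \<Gamma> x y W" "W \<inter> F = {}"
      using assms \<open>finite F\<close> unfolding reach_avoiding_def by blast
    obtain p where "fin_path \<Gamma> p" "hd p = x" "last p = y" "set p \<subseteq> W"
      using fin_path_of_walk[OF W(1)] by blast
    then have "good F p" using xy W(2) unfolding good_def by auto
    then show ?thesis ..
  qed
  then have nxt: "good (\<Union>p\<in>set ps. set p) (SOME p. good (\<Union>p\<in>set ps. set p) p)" for ps
    by (simp add: someI_ex)
  define ps where "ps = rec_nat [] (\<lambda>_ ps. (SOME p. good (\<Union>p\<in>set ps. set p) p) # ps)"
  define q where "q n = (SOME p. good (\<Union>p\<in>set (ps n). set p) p)" for n
  have ps_0: "ps 0 = []" and ps_Suc: "ps (Suc n) = q n # ps n" for n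
    unfolding ps_def q_def by simp_all
  have ps_set: "set (ps n) = q ` {..<n}" for n
    by (induction n) (simp_all add: ps_0 ps_Suc lessThan_Suc)
  have good_q: "good (\<Union>i<n. set (q i)) (q n)" for n
  proof -
    have "good (\<Union>p\<in>set (ps n). set p) (q n)" unfolding q_def by (rule nxt)
    then show ?thesis by (simp add: ps_set)
  qed
  then have disj: "set (q m) \<inter> set (q n) = {}" if "m < n" for m n
    using that unfolding good_def by blast
  have nonempty: "set (q n) \<noteq> {}" for n
    using good_q[of n] by (simp add: good_def fin_path_def)
  have "q m \<noteq> q n" if "m < n" for m n
    using disj[OF that] nonempty[of n] by auto
  then have "inj q" by (metis injI linorder_neqE_nat)
  then have "infinite (range q)" by (rule range_inj_infinite)
  moreover have "\<forall>p\<in>range q. fin_path \<Gamma> p \<and> hd p \<in> X \<and> last p \<in> Y"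
    using good_q unfolding good_def by auto
  moreover have "set (q m) \<inter> set (q n) = {}" if "q m \<noteq> q n" for m n
    using that disj[of m n] disj[of n m] by (cases m n rule: linorder_cases) auto
  then have "\<forall>p\<in>range q. \<forall>p'\<in>range q. p \<noteq> p' \<longrightarrow> set p \<inter> set p' = {}" by blast
  ultimately show ?thesis unfolding reach_le_def by blast
qed

lemma reach_le_iff_reach_avoiding: "reach_le \<Gamma> X Y \<longleftrightarrow> reach_avoiding \<Gamma> X Y"
  using reach_le_imp_reach_avoiding reach_avoiding_imp_reach_le by blast

section \<open>Coarse sequences in a group\<close>

lemma right_cayley_mono: "A \<subseteq> A' \<Longrightarrow> right_cayley V m A \<subseteq> right_cayley V m A'"
  unfolding right_cayley_def by blast

definition coarse_reach :: "('g, 'b) monoid_scheme \<Rightarrow> 'g set \<Rightarrow> 'g set \<Rightarrow> bool" where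
  "coarse_reach G X Y \<longleftrightarrow>
     (\<exists>S. finite S \<and> S \<subseteq> carrier G \<and> reach_avoiding (right_cayley (carrier G) (mult G) S) X Y)"

definition coarse_seq :: "('g, 'b) monoid_scheme \<Rightarrow> (nat \<Rightarrow> 'g) \<Rightarrow> bool" where
  "coarse_seq G \<sigma> \<longleftrightarrow> range \<sigma> \<subseteq> carrier G \<and>
     finite (range (\<lambda>i. inv\<^bsub>G\<^esub> \<sigma> i \<otimes>\<^bsub>G\<^esub> \<sigma> (Suc i))) \<and> (\<forall>g. finite {i. \<sigma> i = g})"

definition coarse_equiv :: "('g, 'b) monoid_scheme \<Rightarrow> (nat \<Rightarrow> 'g) \<Rightarrow> (nat \<Rightarrow> 'g) \<Rightarrow> bool" where
  "coarse_equiv G \<sigma> \<tau> \<longleftrightarrow> coarse_seq G \<sigma> \<and> coarse_seq G \<tau> \<and>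
     coarse_reach G (range \<sigma>) (range \<tau>) \<and> coarse_reach G (range \<tau>) (range \<sigma>)"

definition coarse_ends :: "('g, 'b) monoid_scheme \<Rightarrow> (nat \<Rightarrow> 'g) set set" where
  "coarse_ends G = {\<sigma>. coarse_seq G \<sigma>} // {(\<sigma>, \<tau>). coarse_equiv G \<sigma> \<tau>}"

lemma coarse_seq_finite_vimage: "coarse_seq G \<sigma> \<Longrightarrow> finite F \<Longrightarrow> finite (\<sigma> -` F)"
proof -
  assume "coarse_seq G \<sigma>" "finite F"
  moreover have "\<sigma> -` F = (\<Union>g\<in>F. {i. \<sigma> i = g})" by auto
  ultimately show ?thesis unfolding coarse_seq_def by auto
qed

lemma coarse_seq_infinite_range: "coarse_seq G \<sigma> \<Longrightarrow> infinite (range \<sigma>)"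
  using coarse_seq_finite_vimage[of G \<sigma> "range \<sigma>"] by (auto simp: vimage_def)

lemma coarse_reach_of_infinite_Int: "infinite (X \<inter> Y) \<Longrightarrow> coarse_reach G X Y"
  unfolding coarse_reach_def reach_avoiding_def
proof (intro exI[of _ "{}"] conjI allI impI)
  fix F :: "'a set" assume "infinite (X \<inter> Y)" "finite F"
  then obtain x where "x \<in> X \<inter> Y - F" by (metis Diff_infinite_finite infinite_imp_nonempty ex_in_conv)
  then show "\<exists>x\<in>X. \<exists>y\<in>Y. \<exists>W. walk (right_cayley (carrier G) (mult G) {}) x y W \<and> W \<inter> F = {}"
    by (intro bexI exI[of _ "{x}"]) (auto intro: walk_refl)
qed auto

context group
begin

lemma coarse_seq_walks:
  assumes "coarse_seq G \<sigma>"
  obtains T where "finite T" "T \<subseteq> carrier G"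
    "\<And>j k. \<exists>W. walk (right_cayley (carrier G) (mult G) T) (\<sigma> j) (\<sigma> k) W \<and>
                W \<subseteq> \<sigma> ` {min j k..max j k}"
proof
  define D where "D = range (\<lambda>i. inv (\<sigma> i) \<otimes> \<sigma> (Suc i))"
  let ?\<Gamma> = "right_cayley (carrier G) (mult G) (D \<union> m_inv G ` D)"
  have car: "\<sigma> i \<in> carrier G" for i using assms unfolding coarse_seq_def by auto
  show "finite (D \<union> m_inv G ` D)" using assms unfolding coarse_seq_def D_def by simp
  show "D \<union> m_inv G ` D \<subseteq> carrier G" using car unfolding D_def by auto
  have fwd: "(\<sigma> i, \<sigma> (Suc i)) \<in> ?\<Gamma>" and bwd: "(\<sigma> (Suc i), \<sigma> i) \<in> ?\<Gamma>" for i
  proof -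
    have "\<sigma> (Suc i) = \<sigma> i \<otimes> (inv (\<sigma> i) \<otimes> \<sigma> (Suc i))" "\<sigma> i = \<sigma> (Suc i) \<otimes> inv (inv (\<sigma> i) \<otimes> \<sigma> (Suc i))"
      using car by (simp_all add: m_assoc[symmetric] inv_mult_group)
    then show "(\<sigma> i, \<sigma> (Suc i)) \<in> ?\<Gamma>" "(\<sigma> (Suc i), \<sigma> i) \<in> ?\<Gamma>"
      using car unfolding right_cayley_def D_def by blast+
  qed
  have up: "\<exists>W. walk ?\<Gamma> (\<sigma> j) (\<sigma> k) W \<and> W \<subseteq> \<sigma> ` {j..k}"
       and down: "\<exists>W. walk ?\<Gamma> (\<sigma> k) (\<sigma> j) W \<and> W \<subseteq> \<sigma> ` {j..k}" if "j \<le> k" for j k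
    using that
  proof (induction k rule: dec_induct)
    case base
    have "walk ?\<Gamma> (\<sigma> j) (\<sigma> j) {\<sigma> j}" by (rule walk_refl)
    then show "\<exists>W. walk ?\<Gamma> (\<sigma> j) (\<sigma> j) W \<and> W \<subseteq> \<sigma> ` {j..j}"
      and "\<exists>W. walk ?\<Gamma> (\<sigma> j) (\<sigma> j) W \<and> W \<subseteq> \<sigma> ` {j..j}" by auto
  next
    case (step k)
    from step.IH(1) obtain W where "walk ?\<Gamma> (\<sigma> j) (\<sigma> k) W" "W \<subseteq> \<sigma> ` {j..k}" by blast
    then show "\<exists>W. walk ?\<Gamma> (\<sigma> j) (\<sigma> (Suc k)) W \<and> W \<subseteq> \<sigma> ` {j..Suc k}"
      using walk_append[OF _ walk_edge[OF fwd]] step.hyps by (intro exI) (fastforce simp: image_subset_iff)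
    from step.IH(2) obtain W' where "walk ?\<Gamma> (\<sigma> k) (\<sigma> j) W'" "W' \<subseteq> \<sigma> ` {j..k}" by blast
    then show "\<exists>W. walk ?\<Gamma> (\<sigma> (Suc k)) (\<sigma> j) W \<and> W \<subseteq> \<sigma> ` {j..Suc k}"
      using walk_append[OF walk_edge[OF bwd]] step.hyps by (intro exI) (fastforce simp: image_subset_iff)
  qed
  show "\<exists>W. walk ?\<Gamma> (\<sigma> j) (\<sigma> k) W \<and> W \<subseteq> \<sigma> ` {min j k..max j k}" for j k
    using up[of j k] down[of k j] by (cases "j \<le> k") (simp_all add: min_def max_def)
qed

lemma coarse_reach_trans:
  assumes \<sigma>: "coarse_seq G \<sigma>"
    and XY: "coarse_reach G X (range \<sigma>)" and YZ: "coarse_reach G (range \<sigma>) Z"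
  shows "coarse_reach G X Z"
proof -
  obtain T where T: "finite T" "T \<subseteq> carrier G"
    and walks: "\<And>j k. \<exists>W. walk (right_cayley (carrier G) (mult G) T) (\<sigma> j) (\<sigma> k) W \<and>
                          W \<subseteq> \<sigma> ` {min j k..max j k}"
    using coarse_seq_walks[OF \<sigma>] by blast
  obtain S1 where S1: "finite S1" "S1 \<subseteq> carrier G"
    "reach_avoiding (right_cayley (carrier G) (mult G) S1) X (range \<sigma>)"
    using XY unfolding coarse_reach_def by blast
  obtain S2 where S2: "finite S2" "S2 \<subseteq> carrier G"
    "reach_avoiding (right_cayley (carrier G) (mult G) S2) (range \<sigma>) Z"
    using YZ unfolding coarse_reach_def by blast
  let ?\<Gamma> = "right_cayley (carrier G) (mult G) (S1 \<union> S2 \<union> T)"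
  have "reach_avoiding ?\<Gamma> X Z"
    unfolding reach_avoiding_def
  proof (intro allI impI)
    fix F :: "'a set" assume "finite F"
    obtain N where N: "\<And>i. N \<le> i \<Longrightarrow> \<sigma> i \<notin> F"
      using coarse_seq_finite_vimage[OF \<sigma> \<open>finite F\<close>]
      by (metis finite_nat_set_iff_bounded_le not_less_eq_eq vimageI)
    \<comment> \<open>Also avoiding the initial segment forces the two walks to meet \<open>\<sigma>\<close> beyond \<open>N\<close>.\<close>
    let ?F = "F \<union> \<sigma> ` {..<N}"
    have "finite ?F" using \<open>finite F\<close> by simp
    obtain x j W1 where W1: "x \<in> X" "walk (right_cayley (carrier G) (mult G) S1) x (\<sigma> j) W1"
        "W1 \<inter> ?F = {}"
      using S1(3)[unfolded reach_avoiding_def, rule_format, OF \<open>finite ?F\<close>] by blast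
    obtain k z W3 where W3: "z \<in> Z" "walk (right_cayley (carrier G) (mult G) S2) (\<sigma> k) z W3"
        "W3 \<inter> ?F = {}"
      using S2(3)[unfolded reach_avoiding_def, rule_format, OF \<open>finite ?F\<close>] by blast
    have "\<sigma> j \<notin> \<sigma> ` {..<N}" "\<sigma> k \<notin> \<sigma> ` {..<N}"
      using walk_endpoints[OF W1(2)] walk_endpoints[OF W3(2)] W1(3) W3(3) by blast+
    then have "N \<le> j" "N \<le> k" by (auto simp: not_less[symmetric])
    obtain W2 where W2: "walk (right_cayley (carrier G) (mult G) T) (\<sigma> j) (\<sigma> k) W2"
      "W2 \<subseteq> \<sigma> ` {min j k..max j k}" using walks by blast
    have "W2 \<inter> F = {}" using W2(2) N \<open>N \<le> j\<close> \<open>N \<le> k\<close> by fastforce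
    have sub: "right_cayley (carrier G) (mult G) S1 \<subseteq> ?\<Gamma>" "right_cayley (carrier G) (mult G) S2 \<subseteq> ?\<Gamma>"
      "right_cayley (carrier G) (mult G) T \<subseteq> ?\<Gamma>"
      by (intro right_cayley_mono; blast)+
    have "walk ?\<Gamma> x z (W1 \<union> (W2 \<union> W3))"
      using walk_append[OF walk_mono[OF W1(2) sub(1)]
          walk_append[OF walk_mono[OF W2(1) sub(3)] walk_mono[OF W3(2) sub(2)]]] .
    moreover have "(W1 \<union> (W2 \<union> W3)) \<inter> F = {}" using W1(3) W3(3) \<open>W2 \<inter> F = {}\<close> by blast
    ultimately show "\<exists>x\<in>X. \<exists>z\<in>Z. \<exists>W. walk ?\<Gamma> x z W \<and> W \<inter> F = {}"
      using W1(1) W3(1) by (intro bexI exI conjI)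
  qed
  moreover have "finite (S1 \<union> S2 \<union> T)" "S1 \<union> S2 \<union> T \<subseteq> carrier G" using S1 S2 T by auto
  ultimately show ?thesis unfolding coarse_reach_def by (intro exI[of _ "S1 \<union> S2 \<union> T"] conjI)
qed

lemma coarse_equiv_sym: "coarse_equiv G \<sigma> \<tau> \<Longrightarrow> coarse_equiv G \<tau> \<sigma>"
  unfolding coarse_equiv_def by blast

lemma coarse_equiv_trans: "coarse_equiv G \<sigma> \<tau> \<Longrightarrow> coarse_equiv G \<tau> \<rho> \<Longrightarrow> coarse_equiv G \<sigma> \<rho>"
  unfolding coarse_equiv_def using coarse_reach_trans by blast

lemma coarse_equiv_of_range_subset:
  assumes "coarse_seq G \<sigma>" "coarse_seq G \<tau>" "range \<sigma> \<subseteq> range \<tau>"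
  shows "coarse_equiv G \<sigma> \<tau>"
proof -
  have "infinite (range \<sigma> \<inter> range \<tau>)"
    using coarse_seq_infinite_range[OF assms(1)] assms(3) by (simp add: Int_absorb2)
  then show ?thesis
    unfolding coarse_equiv_def using assms by (simp add: coarse_reach_of_infinite_Int Int_commute)
qed

lemma equiv_coarse_equiv: "equiv {\<sigma>. coarse_seq G \<sigma>} {(\<sigma>, \<tau>). coarse_equiv G \<sigma> \<tau>}"
proof (rule equivI)
  show "{(\<sigma>, \<tau>). coarse_equiv G \<sigma> \<tau>} \<subseteq> {\<sigma>. coarse_seq G \<sigma>} \<times> {\<sigma>. coarse_seq G \<sigma>}"
    unfolding coarse_equiv_def by blast
  have "coarse_equiv G \<sigma> \<sigma>" if "coarse_seq G \<sigma>" for \<sigma>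
    using coarse_equiv_of_range_subset[OF that that] by simp
  then show "refl_on {\<sigma>. coarse_seq G \<sigma>} {(\<sigma>, \<tau>). coarse_equiv G \<sigma> \<tau>}"
    by (auto simp: refl_on_def coarse_equiv_def)
  show "sym {(\<sigma>, \<tau>). coarse_equiv G \<sigma> \<tau>}"
    unfolding sym_def using coarse_equiv_sym by blast
  show "trans {(\<sigma>, \<tau>). coarse_equiv G \<sigma> \<tau>}"
    unfolding trans_def using coarse_equiv_trans by blast
qed

end

section \<open>Quotients and lazy walks\<close>

lemma quotient_eqpoll_image:
  "A // {(a, a'). a \<in> A \<and> a' \<in> A \<and> \<phi> a = \<phi> a'} \<approx> \<phi> ` A"
proof -
  let ?E = "{(a, a'). a \<in> A \<and> a' \<in> A \<and> \<phi> a = \<phi> a'}"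
  have "?E `` {a} = A \<inter> \<phi> -` {\<phi> a}" if "a \<in> A" for a
    using that by auto
  then have "A // ?E = (\<lambda>y. A \<inter> \<phi> -` {y}) ` \<phi> ` A"
    unfolding quotient_def image_image by (simp add: UNION_singleton_eq_range cong: SUP_cong_simp)
  moreover have "inj_on (\<lambda>y. A \<inter> \<phi> -` {y}) (\<phi> ` A)"
    by (rule inj_onI) blast
  ultimately have "bij_betw (\<lambda>y. A \<inter> \<phi> -` {y}) (\<phi> ` A) (A // ?E)"
    by (simp add: bij_betw_def)
  then have "\<phi> ` A \<approx> A // ?E" unfolding eqpoll_def by blast
  then show ?thesis by (rule eqpoll_sym)
qed

lemma quotient_pullback_eqpoll:
  assumes R: "equiv C R" and f: "f ` A \<subseteq> C" and surj: "\<And>c. c \<in> C \<Longrightarrow> \<exists>a\<in>A. (f a, c) \<in> R"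
  shows "A // {(a, a'). a \<in> A \<and> a' \<in> A \<and> (f a, f a') \<in> R} \<approx> C // R"
proof -
  have "{(a, a'). a \<in> A \<and> a' \<in> A \<and> (f a, f a') \<in> R} =
        {(a, a'). a \<in> A \<and> a' \<in> A \<and> R `` {f a} = R `` {f a'}}"
    using f equiv_class_eq_iff[OF R] by blast
  moreover have "(\<lambda>a. R `` {f a}) ` A = C // R"
    unfolding quotient_def using f surj equiv_class_eq[OF R] by fastforce
  ultimately show ?thesis using quotient_eqpoll_image[of A "\<lambda>a. R `` {f a}"] by simp
qed

definition lazy_walk :: "('a \<times> 'a) set \<Rightarrow> (nat \<Rightarrow> 'a) \<Rightarrow> bool" where
  "lazy_walk \<Gamma> w \<longleftrightarrow> (\<forall>n. w (Suc n) = w n \<or> (w n, w (Suc n)) \<in> \<Gamma>)"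

lemma ray_in_lazy_walk:
  assumes lazy: "lazy_walk \<Gamma> w" and fibres: "\<And>v. finite {n. w n = v}"
  obtains \<rho> where "is_ray \<Gamma> \<rho>" "range \<rho> \<subseteq> range w"
proof -
  \<comment> \<open>Jump to the last visit of the current vertex, then take one step.\<close>
  define last_visit where "last_visit v = Max {n. w n = v}" for v
  have last_visit: "w (last_visit (w n)) = w n" "n \<le> last_visit (w n)" for n
    using Max_in[OF fibres, of "w n"] Max_ge[OF fibres, of n "w n"] unfolding last_visit_def by auto
  define \<tau> where "\<tau> = rec_nat (last_visit (w 0)) (\<lambda>_ t. last_visit (w (Suc t)))"
  have \<tau>_0: "\<tau> 0 = last_visit (w 0)" and \<tau>_Suc: "\<tau> (Suc k) = last_visit (w (Suc (\<tau> k)))" for k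
    unfolding \<tau>_def by simp_all
  define \<rho> where "\<rho> k = w (\<tau> k)" for k
  have \<tau>_last: "\<tau> k = last_visit (\<rho> k)" for k
    by (cases k) (simp_all add: \<rho>_def \<tau>_0 \<tau>_Suc last_visit)
  have \<rho>_Suc: "\<rho> (Suc k) = w (Suc (\<tau> k))" for k
    by (simp add: \<rho>_def \<tau>_Suc last_visit)
  have "strict_mono \<tau>"
    unfolding strict_mono_Suc_iff using last_visit(2) by (simp add: \<tau>_Suc Suc_le_lessD)
  have "inj \<rho>"
  proof (rule injI)
    fix j k assume "\<rho> j = \<rho> k"
    then have "\<tau> j = \<tau> k" by (simp add: \<tau>_last)
    then show "j = k" using \<open>strict_mono \<tau>\<close> strict_mono_eq by blast
  qed
  moreover have "(\<rho> k, \<rho> (Suc k)) \<in> \<Gamma>" for k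
  proof -
    have "w (Suc (\<tau> k)) \<noteq> w (\<tau> k)"
    proof
      assume "w (Suc (\<tau> k)) = w (\<tau> k)"
      then have "Suc (\<tau> k) \<le> last_visit (w (\<tau> k))" using last_visit(2)[of "Suc (\<tau> k)"] by simp
      also have "last_visit (w (\<tau> k)) = \<tau> k" using \<tau>_last[of k] by (simp add: \<rho>_def)
      finally show False by simp
    qed
    then have "(w (\<tau> k), w (Suc (\<tau> k))) \<in> \<Gamma>" using lazy unfolding lazy_walk_def by blast
    then show ?thesis by (simp only: \<rho>_Suc \<rho>_def[of k])
  qed
  ultimately show ?thesis using that unfolding is_ray_def \<rho>_def by blast
qed

section \<open>Right simple semigroups with finite fibres over a group\<close>

locale right_simple_over_group = group +
  fixes V :: "'v set" and m :: "'v \<Rightarrow> 'v \<Rightarrow> 'v" and A :: "'v set" and \<pi> :: "'v \<Rightarrow> 'a"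
  assumes closed: "x \<in> V \<Longrightarrow> y \<in> V \<Longrightarrow> m x y \<in> V"
    and assoc: "x \<in> V \<Longrightarrow> y \<in> V \<Longrightarrow> z \<in> V \<Longrightarrow> m (m x y) z = m x (m y z)"
    and finite_generators: "finite A"
    and generating: "sg_generating_set V m A"
    and hom: "x \<in> V \<Longrightarrow> y \<in> V \<Longrightarrow> \<pi> (m x y) = \<pi> x \<otimes> \<pi> y"
    and image_\<pi>: "\<pi> ` V = carrier G"
    and finite_fibres: "finite {v \<in> V. \<pi> v = g}"
    and right_simple: "v \<in> V \<Longrightarrow> w \<in> V \<Longrightarrow> \<exists>c\<in>V. w = m v c"
begin

abbreviation \<Gamma> :: "('v \<times> 'v) set" where
  "\<Gamma> \<equiv> right_cayley V m A"

lemma generators_subset: "A \<subseteq> V"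
  using generating unfolding sg_generating_set_def by blast

lemma \<pi>_carrier: "x \<in> V \<Longrightarrow> \<pi> x \<in> carrier G"
  using image_\<pi> by blast

lemma edge_iff: "(x, y) \<in> \<Gamma> \<longleftrightarrow> x \<in> V \<and> (\<exists>a\<in>A. y = m x a)"
  unfolding right_cayley_def by blast

lemma edge_in_V: "(x, y) \<in> \<Gamma> \<Longrightarrow> x \<in> V \<and> y \<in> V"
  unfolding right_cayley_def using closed generators_subset by auto

lemma walk_in_V: "walk \<Gamma> x y W \<Longrightarrow> x \<in> V \<Longrightarrow> W \<subseteq> V"
  by (induction rule: walk.induct) (auto dest: edge_in_V)

lemma finite_\<pi>_vimage: "finite F \<Longrightarrow> finite {v \<in> V. \<pi> v \<in> F}"
proof -
  assume "finite F"
  moreover have "{v \<in> V. \<pi> v \<in> F} = (\<Union>g\<in>F. {v \<in> V. \<pi> v = g})" by blast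
  ultimately show ?thesis using finite_fibres by simp
qed

lemma exists_word: "c \<in> V \<Longrightarrow> \<exists>ws. set ws \<subseteq> A \<and> (\<forall>v\<in>V. foldl m v ws = m v c)"
proof -
  assume "c \<in> V"
  then have "c \<in> sg_gen m A" using generating unfolding sg_generating_set_def by blast
  then show ?thesis
  proof (induction rule: sg_gen.induct)
    case (base a)
    show ?case by (intro exI[of _ "[a]"]) (simp add: base)
  next
    case (step x y)
    then obtain wx wy where wx: "set wx \<subseteq> A" "\<forall>v\<in>V. foldl m v wx = m v x"
      and wy: "set wy \<subseteq> A" "\<forall>v\<in>V. foldl m v wy = m v y" by blast
    have "x \<in> V" "y \<in> V"
      using step.hyps generating unfolding sg_generating_set_def by blast+
    then have "\<forall>v\<in>V. foldl m v (wx @ wy) = m v (m x y)"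
      using wx wy by (simp add: closed assoc)
    then show ?case using wx wy by (intro exI[of _ "wx @ wy"]) simp
  qed
qed

definition word_value :: "'v list \<Rightarrow> 'a" where
  "word_value ws = foldr (\<lambda>a g. \<pi> a \<otimes> g) ws \<one>"

lemma word_value_carrier: "set ws \<subseteq> V \<Longrightarrow> word_value ws \<in> carrier G"
  unfolding word_value_def by (induction ws) (auto simp: \<pi>_carrier)

lemma foldl_in_V: "set ws \<subseteq> V \<Longrightarrow> v \<in> V \<Longrightarrow> foldl m v ws \<in> V"
  by (induction ws arbitrary: v) (auto simp: closed)

lemma \<pi>_foldl: "set ws \<subseteq> V \<Longrightarrow> v \<in> V \<Longrightarrow> \<pi> (foldl m v ws) = \<pi> v \<otimes> word_value ws"
proof (induction ws arbitrary: v)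
  case Nil
  then show ?case by (simp add: word_value_def \<pi>_carrier)
next
  case (Cons a ws)
  then have "\<pi> (foldl m (m v a) ws) = \<pi> (m v a) \<otimes> word_value ws" by (simp add: closed)
  then show ?case using Cons.prems
    by (simp add: word_value_def hom \<pi>_carrier m_assoc word_value_carrier[unfolded word_value_def])
qed

lemma walk_foldl:
  "set ws \<subseteq> A \<Longrightarrow> v \<in> V \<Longrightarrow>
     walk \<Gamma> v (foldl m v ws) ((\<lambda>k. foldl m v (take k ws)) ` {..length ws})"
proof (induction ws arbitrary: v)
  case Nil
  then show ?case by (simp add: walk_refl)
next
  case (Cons a ws)
  then have "(v, m v a) \<in> \<Gamma>" "m v a \<in> V"
    using closed generators_subset by (auto simp: edge_iff)
  then have "walk \<Gamma> v (foldl m (m v a) ws)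
      (insert v ((\<lambda>k. foldl m (m v a) (take k ws)) ` {..length ws}))"
    using Cons by (intro walk_step) auto
  then show ?case by (simp add: atMost_Suc_eq_insert_0 image_image)
qed

lemma walk_project:
  "walk \<Gamma> x y W \<Longrightarrow> walk (right_cayley (carrier G) (mult G) (\<pi> ` A)) (\<pi> x) (\<pi> y) (\<pi> ` W)"
proof (erule walk_map)
  fix u v assume "(u, v) \<in> \<Gamma>"
  then obtain a where "u \<in> V" "a \<in> A" "v = m u a" using edge_iff by blast
  moreover then have "\<pi> v = \<pi> u \<otimes> \<pi> a" using generators_subset by (auto simp: hom)
  ultimately show "(\<pi> u, \<pi> v) \<in> right_cayley (carrier G) (mult G) (\<pi> ` A)"
    unfolding right_cayley_def using \<pi>_carrier by blast
qed

lemma reach_avoiding_imp_coarse_reach: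
  assumes "X \<subseteq> V" and "reach_avoiding \<Gamma> X Y"
  shows "coarse_reach G (\<pi> ` X) (\<pi> ` Y)"
proof -
  have "reach_avoiding (right_cayley (carrier G) (mult G) (\<pi> ` A)) (\<pi> ` X) (\<pi> ` Y)"
    unfolding reach_avoiding_def
  proof (intro allI impI)
    fix F :: "'a set" assume "finite F"
    then obtain x y W where "x \<in> X" "y \<in> Y" "walk \<Gamma> x y W" "W \<inter> {v \<in> V. \<pi> v \<in> F} = {}"
      using assms(2)[unfolded reach_avoiding_def, rule_format, OF finite_\<pi>_vimage] by blast
    moreover have "W \<subseteq> V" using walk_in_V \<open>walk \<Gamma> x y W\<close> \<open>x \<in> X\<close> assms(1) by blast
    ultimately have "\<pi> ` W \<inter> F = {}" "\<pi> x \<in> \<pi> ` X" "\<pi> y \<in> \<pi> ` Y" by auto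
    with walk_project[OF \<open>walk \<Gamma> x y W\<close>]
    show "\<exists>x\<in>\<pi> ` X. \<exists>y\<in>\<pi> ` Y. \<exists>W. walk (right_cayley (carrier G) (mult G) (\<pi> ` A)) x y W \<and> W \<inter> F = {}"
      by blast
  qed
  moreover have "finite (\<pi> ` A)" "\<pi> ` A \<subseteq> carrier G"
    using finite_generators generators_subset \<pi>_carrier by auto
  ultimately show ?thesis unfolding coarse_reach_def by (intro exI[of _ "\<pi> ` A"] conjI)
qed

lemma lifts_of_bounded_steps:
  assumes "finite S" "S \<subseteq> carrier G"
  obtains Q where "finite Q" "Q \<subseteq> carrier G"
    "\<And>v v' s. v \<in> V \<Longrightarrow> v' \<in> V \<Longrightarrow> s \<in> S \<Longrightarrow> \<pi> v' = \<pi> v \<otimes> s \<Longrightarrow>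
       \<exists>W. walk \<Gamma> v v' W \<and> (\<forall>u\<in>W. \<exists>q\<in>Q. \<pi> u = \<pi> v \<otimes> q)"
proof -
  define C where "C = {c \<in> V. \<pi> c \<in> S}"
  have "finite C" unfolding C_def using finite_\<pi>_vimage[OF assms(1)] .
  define wd where "wd c = (SOME ws. set ws \<subseteq> A \<and> (\<forall>v\<in>V. foldl m v ws = m v c))" for c
  have wd: "set (wd c) \<subseteq> A \<and> (\<forall>v\<in>V. foldl m v (wd c) = m v c)" if "c \<in> V" for c
    using someI_ex[OF exists_word[OF that]] unfolding wd_def .
  have take_V: "set (take k (wd c)) \<subseteq> V" if "c \<in> V" for c k
  proof -
    have "set (take k (wd c)) \<subseteq> set (wd c)" by (rule set_take_subset)
    also have "\<dots> \<subseteq> A" using wd[OF that] by blast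
    finally show ?thesis using generators_subset by blast
  qed
  define Q where "Q = (\<Union>c\<in>C. (\<lambda>k. word_value (take k (wd c))) ` {..length (wd c)})"
  have "finite Q" unfolding Q_def using \<open>finite C\<close> by (intro finite_UN_I) auto
  moreover have "Q \<subseteq> carrier G"
  proof
    fix q assume "q \<in> Q"
    then obtain c k where "c \<in> C" "q = word_value (take k (wd c))" unfolding Q_def by blast
    then show "q \<in> carrier G" using word_value_carrier[OF take_V] unfolding C_def by blast
  qed
  moreover have "\<exists>W. walk \<Gamma> v v' W \<and> (\<forall>u\<in>W. \<exists>q\<in>Q. \<pi> u = \<pi> v \<otimes> q)"
    if v: "v \<in> V" "v' \<in> V" and s: "s \<in> S" "\<pi> v' = \<pi> v \<otimes> s" for v v' s
  proof -
    obtain c where c: "c \<in> V" "v' = m v c" using right_simple v by blast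
    have "\<pi> v \<otimes> \<pi> c = \<pi> v \<otimes> s" using v c s hom by simp
    moreover have "\<pi> v \<in> carrier G" "\<pi> c \<in> carrier G" "s \<in> carrier G"
      using \<pi>_carrier v(1) c(1) s(1) assms(2) by auto
    ultimately have "\<pi> c = s" by simp
    then have "c \<in> C" using c unfolding C_def using s(1) by simp
    let ?W = "(\<lambda>k. foldl m v (take k (wd c))) ` {..length (wd c)}"
    have "walk \<Gamma> v v' ?W" using walk_foldl[of "wd c" v] wd[OF c(1)] v(1) c(2) by simp
    moreover have "\<exists>q\<in>Q. \<pi> u = \<pi> v \<otimes> q" if u: "u \<in> ?W" for u
    proof -
      obtain k where k: "k \<le> length (wd c)" "u = foldl m v (take k (wd c))" using u by blast
      then have "\<pi> u = \<pi> v \<otimes> word_value (take k (wd c))"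
        using \<pi>_foldl[OF take_V[OF c(1)] v(1)] by simp
      moreover have "word_value (take k (wd c)) \<in> Q"
        unfolding Q_def using \<open>c \<in> C\<close> k(1) by auto
      ultimately show ?thesis by blast
    qed
    ultimately show ?thesis by blast
  qed
  ultimately show ?thesis by (rule that)
qed

lemma lift_steps_avoiding:
  assumes "finite S" "S \<subseteq> carrier G" "finite F"
  obtains F' where "finite F'"
    "\<And>v v' s. \<pi> v \<notin> F' \<Longrightarrow> v \<in> V \<Longrightarrow> v' \<in> V \<Longrightarrow> s \<in> S \<Longrightarrow> \<pi> v' = \<pi> v \<otimes> s \<Longrightarrow>
       \<exists>W. walk \<Gamma> v v' W \<and> W \<inter> F = {}"
proof -
  obtain Q where Q: "finite Q" "Q \<subseteq> carrier G"
    and lift: "\<And>v v' s. v \<in> V \<Longrightarrow> v' \<in> V \<Longrightarrow> s \<in> S \<Longrightarrow> \<pi> v' = \<pi> v \<otimes> s \<Longrightarrow>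
       \<exists>W. walk \<Gamma> v v' W \<and> (\<forall>u\<in>W. \<exists>q\<in>Q. \<pi> u = \<pi> v \<otimes> q)"
    by (rule lifts_of_bounded_steps[OF assms(1,2)]) blast
  \<comment> \<open>A lift starting over \<open>x\<close> stays over \<open>x Q\<close>, so it misses \<open>F\<close> once \<open>x\<close> misses \<open>\<pi>(F) Q\<inverse>\<close>.\<close>
  define F' where "F' = (\<lambda>(f, q). \<pi> f \<otimes> inv q) ` ((F \<inter> V) \<times> Q)"
  have "finite F'" unfolding F'_def using \<open>finite F\<close> Q(1) by simp
  moreover have "\<exists>W. walk \<Gamma> v v' W \<and> W \<inter> F = {}"
    if v: "\<pi> v \<notin> F'" "v \<in> V" "v' \<in> V" and s: "s \<in> S" "\<pi> v' = \<pi> v \<otimes> s" for v v' s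
  proof -
    obtain W where W: "walk \<Gamma> v v' W" "\<forall>u\<in>W. \<exists>q\<in>Q. \<pi> u = \<pi> v \<otimes> q"
      using lift v(2,3) s by blast
    have "u \<notin> F" if "u \<in> W" for u
    proof
      assume "u \<in> F"
      obtain q where q: "q \<in> Q" "\<pi> u = \<pi> v \<otimes> q" using W(2) \<open>u \<in> W\<close> by blast
      have "u \<in> V" using walk_in_V[OF W(1) v(2)] \<open>u \<in> W\<close> by blast
      have "\<pi> v = \<pi> u \<otimes> inv q"
        using q(2) subsetD[OF Q(2) q(1)] \<pi>_carrier[OF v(2)] by (simp add: m_assoc)
      also have "\<dots> \<in> F'"
        unfolding F'_def using \<open>u \<in> F\<close> \<open>u \<in> V\<close> q(1) by (intro image_eqI[where x = "(u, q)"]) auto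
      finally show False using v(1) by contradiction
    qed
    then show ?thesis using W(1) by blast
  qed
  ultimately show ?thesis by (rule that)
qed

lemma lift_walk_avoiding:
  assumes S: "finite S" "S \<subseteq> carrier G" and "finite F"
  obtains F' where "finite F'"
    "\<And>x y W' v w. walk (right_cayley (carrier G) (mult G) S) x y W' \<Longrightarrow> W' \<inter> F' = {} \<Longrightarrow>
       v \<in> V \<Longrightarrow> w \<in> V \<Longrightarrow> \<pi> v = x \<Longrightarrow> \<pi> w = y \<Longrightarrow> \<exists>W. walk \<Gamma> v w W \<and> W \<inter> F = {}"
proof -
  have "finite (insert \<one> S)" "insert \<one> S \<subseteq> carrier G" using S by auto
  then obtain F' where "finite F'" and lift_step:
    "\<And>v v' s. \<pi> v \<notin> F' \<Longrightarrow> v \<in> V \<Longrightarrow> v' \<in> V \<Longrightarrow> s \<in> insert \<one> S \<Longrightarrow> \<pi> v' = \<pi> v \<otimes> s \<Longrightarrow>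
       \<exists>W. walk \<Gamma> v v' W \<and> W \<inter> F = {}"
    using \<open>finite F\<close> by (rule lift_steps_avoiding) blast
  have "\<exists>W. walk \<Gamma> v w W \<and> W \<inter> F = {}"
    if "walk (right_cayley (carrier G) (mult G) S) x y W'" "W' \<inter> F' = {}"
      "v \<in> V" "w \<in> V" "\<pi> v = x" "\<pi> w = y" for x y W' v w
    using that
  proof (induction arbitrary: v rule: walk.induct)
    case (walk_refl x)
    then show ?case using lift_step[of v w \<one>] \<pi>_carrier[of v] by auto
  next
    case (walk_step x y z W')
    then obtain s where s: "x \<in> carrier G" "s \<in> S" "y = x \<otimes> s" unfolding right_cayley_def by blast
    then have "y \<in> carrier G" using S(2) by auto
    then obtain v' where v': "v' \<in> V" "\<pi> v' = y" using image_\<pi> by (metis imageE)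
    obtain W1 where W1: "walk \<Gamma> v v' W1" "W1 \<inter> F = {}"
      using lift_step[of v v' s] walk_step.prems s v' by auto
    obtain W2 where W2: "walk \<Gamma> v' w W2" "W2 \<inter> F = {}"
      using walk_step.IH[of v'] walk_step.prems v' by auto
    have "walk \<Gamma> v w (W1 \<union> W2)" using walk_append[OF W1(1) W2(1)] .
    moreover have "(W1 \<union> W2) \<inter> F = {}" using W1(2) W2(2) by blast
    ultimately show ?case by blast
  qed
  with \<open>finite F'\<close> show ?thesis by (rule that)
qed

lemma coarse_reach_imp_reach_avoiding:
  assumes "X \<subseteq> V" "Y \<subseteq> V" and "coarse_reach G (\<pi> ` X) (\<pi> ` Y)"
  shows "reach_avoiding \<Gamma> X Y"
  unfolding reach_avoiding_def
proof (intro allI impI)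
  fix F :: "'v set" assume "finite F"
  obtain S where S: "finite S" "S \<subseteq> carrier G"
    "reach_avoiding (right_cayley (carrier G) (mult G) S) (\<pi> ` X) (\<pi> ` Y)"
    using assms(3) unfolding coarse_reach_def by blast
  obtain F' where "finite F'" and lift:
    "\<And>x y W' v w. walk (right_cayley (carrier G) (mult G) S) x y W' \<Longrightarrow> W' \<inter> F' = {} \<Longrightarrow>
       v \<in> V \<Longrightarrow> w \<in> V \<Longrightarrow> \<pi> v = x \<Longrightarrow> \<pi> w = y \<Longrightarrow> \<exists>W. walk \<Gamma> v w W \<and> W \<inter> F = {}"
    by (rule lift_walk_avoiding[OF S(1,2) \<open>finite F\<close>]) blast
  obtain v w W' where vw: "v \<in> X" "w \<in> Y"
    and W': "walk (right_cayley (carrier G) (mult G) S) (\<pi> v) (\<pi> w) W'" "W' \<inter> F' = {}"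
    using S(3)[unfolded reach_avoiding_def, rule_format, OF \<open>finite F'\<close>] by blast
  obtain W where "walk \<Gamma> v w W" "W \<inter> F = {}"
    using lift[OF W'] vw assms(1,2) by blast
  with vw show "\<exists>x\<in>X. \<exists>y\<in>Y. \<exists>W. walk \<Gamma> x y W \<and> W \<inter> F = {}" by blast
qed

lemma reach_le_iff_coarse_reach:
  "X \<subseteq> V \<Longrightarrow> Y \<subseteq> V \<Longrightarrow> reach_le \<Gamma> X Y \<longleftrightarrow> coarse_reach G (\<pi> ` X) (\<pi> ` Y)"
  by (auto simp: reach_le_iff_reach_avoiding
      intro: reach_avoiding_imp_coarse_reach coarse_reach_imp_reach_avoiding)

lemma edge_increment: "(u, u') \<in> \<Gamma> \<Longrightarrow> inv (\<pi> u) \<otimes> \<pi> u' \<in> \<pi> ` A"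
proof -
  assume "(u, u') \<in> \<Gamma>"
  then obtain a where a: "u \<in> V" "a \<in> A" "u' = m u a" using edge_iff by blast
  then have "a \<in> V" using generators_subset by blast
  with a have "inv (\<pi> u) \<otimes> \<pi> u' = \<pi> a" by (simp add: hom \<pi>_carrier m_assoc[symmetric])
  with a(2) show ?thesis by blast
qed

lemma edge_increment_backwards: "(u', u) \<in> \<Gamma> \<Longrightarrow> inv (\<pi> u) \<otimes> \<pi> u' \<in> m_inv G ` \<pi> ` A"
proof -
  assume "(u', u) \<in> \<Gamma>"
  then obtain a where a: "u' \<in> V" "a \<in> A" "u = m u' a" using edge_iff by blast
  then have "a \<in> V" using generators_subset by blast
  with a have "inv (\<pi> u) \<otimes> \<pi> u' = inv (\<pi> a)"
    by (simp add: hom \<pi>_carrier inv_mult_group m_assoc)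
  with a(2) show ?thesis by blast
qed

lemma ray_antiray_in_V: "r \<in> rays_antirays \<Gamma> \<Longrightarrow> r i \<in> V"
  unfolding rays_antirays_def is_ray_def is_antiray_def using edge_in_V by blast

lemma coarse_seq_ray_antiray:
  assumes r: "r \<in> rays_antirays \<Gamma>"
  shows "coarse_seq G (\<pi> \<circ> r)"
proof -
  have "inv (\<pi> (r i)) \<otimes> \<pi> (r (Suc i)) \<in> \<pi> ` A \<union> m_inv G ` \<pi> ` A" for i
  proof -
    have "(r i, r (Suc i)) \<in> \<Gamma> \<or> (r (Suc i), r i) \<in> \<Gamma>"
      using r unfolding rays_antirays_def is_ray_def is_antiray_def by blast
    then show ?thesis using edge_increment edge_increment_backwards by blast
  qed
  then have "range (\<lambda>i. inv (\<pi> (r i)) \<otimes> \<pi> (r (Suc i))) \<subseteq> \<pi> ` A \<union> m_inv G ` \<pi> ` A"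
    by blast
  then have "finite (range (\<lambda>i. inv (\<pi> (r i)) \<otimes> \<pi> (r (Suc i))))"
    by (rule finite_subset) (use finite_generators in simp)
  moreover have "finite {i. \<pi> (r i) = g}" for g
  proof -
    have "inj r" using r unfolding rays_antirays_def is_ray_def is_antiray_def by blast
    moreover have "{i. \<pi> (r i) = g} = r -` {v \<in> V. \<pi> v = g}" using ray_antiray_in_V[OF r] by auto
    ultimately show ?thesis using finite_vimageI[OF finite_fibres] by simp
  qed
  ultimately show ?thesis
    unfolding coarse_seq_def using ray_antiray_in_V[OF r] \<pi>_carrier by auto
qed

lemma end_equiv_iff:
  "(r, s) \<in> end_equiv \<Gamma> \<longleftrightarrow>
     r \<in> rays_antirays \<Gamma> \<and> s \<in> rays_antirays \<Gamma> \<and> coarse_equiv G (\<pi> \<circ> r) (\<pi> \<circ> s)"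
proof -
  have "reach_le \<Gamma> (range r) (range s) \<longleftrightarrow> coarse_reach G (range (\<pi> \<circ> r)) (range (\<pi> \<circ> s))"
    if "r \<in> rays_antirays \<Gamma>" "s \<in> rays_antirays \<Gamma>" for r s
    using reach_le_iff_coarse_reach[of "range r" "range s"] ray_antiray_in_V that
    by (auto simp: image_comp)
  then show ?thesis
    unfolding end_equiv_def coarse_equiv_def using coarse_seq_ray_antiray by auto
qed

lemma coarse_seq_lazy_walk:
  assumes lazy: "lazy_walk \<Gamma> w" and V: "\<And>n. w n \<in> V" and fibres: "\<And>g. finite {n. \<pi> (w n) = g}"
  shows "coarse_seq G (\<pi> \<circ> w)"
proof -
  have "inv (\<pi> (w n)) \<otimes> \<pi> (w (Suc n)) \<in> insert \<one> (\<pi> ` A)" for n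
  proof (cases "w (Suc n) = w n")
    case True
    then show ?thesis using \<pi>_carrier[OF V] by simp
  next
    case False
    then have "(w n, w (Suc n)) \<in> \<Gamma>" using lazy unfolding lazy_walk_def by blast
    then show ?thesis using edge_increment by blast
  qed
  then have "range (\<lambda>n. inv (\<pi> (w n)) \<otimes> \<pi> (w (Suc n))) \<subseteq> insert \<one> (\<pi> ` A)"
    by blast
  then have "finite (range (\<lambda>n. inv (\<pi> (w n)) \<otimes> \<pi> (w (Suc n))))"
    by (rule finite_subset) (use finite_generators in simp)
  then show ?thesis
    unfolding coarse_seq_def using V \<pi>_carrier fibres by auto
qed

lemma lazy_walk_interpolation:
  assumes b: "\<And>i. b i \<in> V" and ws: "\<And>i. set (ws i) \<subseteq> A" "\<And>i. length (ws i) \<le> M"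
    and step: "\<And>i. foldl m (b i) (ws i) = b (Suc i)" and "0 < M"
  shows "lazy_walk \<Gamma> (\<lambda>n. foldl m (b (n div M)) (take (n mod M) (ws (n div M))))"
proof -
  define p where "p i k = foldl m (b i) (take k (ws i))" for i k
  have p_step: "p i (Suc k) = p i k \<or> (p i k, p i (Suc k)) \<in> \<Gamma>" for i k
  proof (cases "k < length (ws i)")
    case True
    then have "p i (Suc k) = m (p i k) (ws i ! k)"
      unfolding p_def by (simp add: take_Suc_conv_app_nth)
    moreover have "p i k \<in> V"
      unfolding p_def using b ws(1) generators_subset
      by (meson foldl_in_V order_trans set_take_subset)
    moreover have "ws i ! k \<in> A" using ws(1) True by (meson nth_mem subsetD)
    ultimately show ?thesis by (auto simp: edge_iff)
  next
    case False
    then show ?thesis unfolding p_def by simp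
  qed
  have p_M: "p i M = p (Suc i) 0" for i
    unfolding p_def using ws(2) step by simp
  have "(\<lambda>n. p (n div M) (n mod M)) (Suc n) = p (n div M) (Suc (n mod M))" for n
    using p_M by (simp add: div_Suc mod_Suc)
  then show ?thesis
    unfolding lazy_walk_def p_def[symmetric] using p_step by metis
qed

lemma finite_fibres_interpolation:
  assumes \<sigma>: "coarse_seq G \<sigma>" and b: "\<And>i. b i \<in> V" "\<And>i. \<pi> (b i) = \<sigma> i"
    and ws: "\<And>i. set (ws i) \<subseteq> A" "finite (range ws)" and "0 < M"
  shows "finite {n. \<pi> (foldl m (b (n div M)) (take (n mod M) (ws (n div M)))) = g}"
proof -
  define Q where "Q = (\<lambda>(xs, k). word_value (take k xs)) ` (range ws \<times> {..<M})"
  have take_V: "set (take k (ws i)) \<subseteq> V" for i k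
    using ws(1) generators_subset by (meson order_trans set_take_subset)
  have \<pi>_walk: "\<pi> (foldl m (b (n div M)) (take (n mod M) (ws (n div M)))) = \<sigma> (n div M) \<otimes> q
      \<and> q \<in> Q \<and> q \<in> carrier G" if "q = word_value (take (n mod M) (ws (n div M)))" for n q
    using that \<pi>_foldl[OF take_V b(1)] b(2) word_value_carrier[OF take_V] \<open>0 < M\<close>
    unfolding Q_def by auto
  define F where "F = (\<lambda>q. g \<otimes> inv q) ` Q"
  have "finite F" unfolding F_def Q_def using ws(2) by simp
  then obtain N where N: "\<forall>i\<in>\<sigma> -` F. i < N"
    using coarse_seq_finite_vimage[OF \<sigma>] finite_nat_set_iff_bounded by blast
  have "n < N * M" if g: "\<pi> (foldl m (b (n div M)) (take (n mod M) (ws (n div M)))) = g" for n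
  proof -
    obtain q where q: "g = \<sigma> (n div M) \<otimes> q" "q \<in> Q" "q \<in> carrier G"
      using \<pi>_walk g by blast
    moreover have "\<sigma> (n div M) \<in> carrier G" using \<sigma> unfolding coarse_seq_def by blast
    ultimately have "\<sigma> (n div M) = g \<otimes> inv q" by (simp add: m_assoc)
    then have "\<sigma> (n div M) \<in> F" unfolding F_def using q(2) by blast
    then have "n div M < N" using N by blast
    then show ?thesis using \<open>0 < M\<close> by (simp add: div_less_iff_less_mult)
  qed
  then have "{n. \<pi> (foldl m (b (n div M)) (take (n mod M) (ws (n div M)))) = g} \<subseteq> {..<N * M}"
    by blast
  then show ?thesis by (rule finite_subset) simp
qed

lemma coarse_seq_lift:
  assumes \<sigma>: "coarse_seq G \<sigma>"
  obtains b ws where "\<And>i. b i \<in> V" "\<And>i. \<pi> (b i) = \<sigma> i" "\<And>i. set (ws i) \<subseteq> A"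
    "\<And>i. foldl m (b i) (ws i) = b (Suc i)" "finite (range ws)"
proof -
  have \<sigma>_carrier: "\<sigma> i \<in> carrier G" for i using \<sigma> unfolding coarse_seq_def by blast
  define t where "t i = inv (\<sigma> i) \<otimes> \<sigma> (Suc i)" for i
  have t: "t i \<in> carrier G" "\<sigma> (Suc i) = \<sigma> i \<otimes> t i" for i
    unfolding t_def using \<sigma>_carrier by (simp_all add: m_assoc[symmetric])
  define lift where "lift g = (SOME v. v \<in> V \<and> \<pi> v = g)" for g
  have lift: "lift g \<in> V \<and> \<pi> (lift g) = g" if "g \<in> carrier G" for g
  proof -
    have "g \<in> \<pi> ` V" using that image_\<pi> by simp
    then have "\<exists>v. v \<in> V \<and> \<pi> v = g" by blast
    then show ?thesis unfolding lift_def by (rule someI_ex)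
  qed
  define wd where "wd g = (SOME ws. set ws \<subseteq> A \<and> (\<forall>v\<in>V. foldl m v ws = m v (lift g)))" for g
  have wd: "set (wd g) \<subseteq> A" "\<forall>v\<in>V. foldl m v (wd g) = m v (lift g)" if "g \<in> carrier G" for g
    using someI_ex[OF exists_word[OF conjunct1[OF lift[OF that]]]] unfolding wd_def by blast+
  define b where "b = rec_nat (lift (\<sigma> 0)) (\<lambda>i v. m v (lift (t i)))"
  have b_0: "b 0 = lift (\<sigma> 0)" and b_Suc: "b (Suc i) = m (b i) (lift (t i))" for i
    unfolding b_def by simp_all
  have b: "b i \<in> V \<and> \<pi> (b i) = \<sigma> i" for i
  proof (induction i)
    case 0
    show ?case using lift[OF \<sigma>_carrier] by (simp add: b_0)
  next
    case (Suc i)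
    then show ?case using lift[OF t(1)] t(2) by (simp add: b_Suc closed hom)
  qed
  have "finite (range (\<lambda>i. wd (t i)))"
  proof -
    have "finite (range t)" using \<sigma> unfolding coarse_seq_def t_def by blast
    then have "finite (wd ` range t)" by (rule finite_imageI)
    then show ?thesis by (simp add: image_image)
  qed
  moreover have "foldl m (b i) (wd (t i)) = b (Suc i)" for i
    using wd(2)[OF t(1)] b by (simp add: b_Suc)
  ultimately show ?thesis using b wd(1)[OF t(1)] by (intro that[of b "\<lambda>i. wd (t i)"]) auto
qed

lemma exists_ray_coarse_equiv:
  assumes \<sigma>: "coarse_seq G \<sigma>"
  obtains \<rho> where "is_ray \<Gamma> \<rho>" "coarse_equiv G (\<pi> \<circ> \<rho>) \<sigma>"
proof -
  obtain b ws where b: "\<And>i. b i \<in> V" "\<And>i. \<pi> (b i) = \<sigma> i"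
    and ws: "\<And>i. set (ws i) \<subseteq> A" "\<And>i. foldl m (b i) (ws i) = b (Suc i)" "finite (range ws)"
    using coarse_seq_lift[OF \<sigma>] by blast
  define M where "M = Suc (Max (length ` range ws))"
  have M: "length (ws i) \<le> M" "0 < M" for i
    unfolding M_def using ws(3) by (simp_all add: le_SucI)
  \<comment> \<open>Block \<open>i\<close> of \<open>w\<close> spells \<open>ws i\<close> from \<open>b i\<close>, then waits at \<open>b (Suc i)\<close>.\<close>
  define w where "w n = foldl m (b (n div M)) (take (n mod M) (ws (n div M)))" for n
  have w_V: "w n \<in> V" for n
    unfolding w_def using b(1) ws(1) generators_subset by (meson foldl_in_V order_trans set_take_subset)
  have lazy: "lazy_walk \<Gamma> w"
    unfolding w_def using b(1) ws(1) M(1) ws(2) M(2) by (rule lazy_walk_interpolation)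
  have fibres: "finite {n. \<pi> (w n) = g}" for g
    unfolding w_def using \<sigma> b ws(1,3) M(2) by (rule finite_fibres_interpolation)
  have "finite {n. w n = v}" for v using fibres[of "\<pi> v"] by (rule finite_subset[rotated]) auto
  with lazy obtain \<rho> where \<rho>: "is_ray \<Gamma> \<rho>" "range \<rho> \<subseteq> range w" by (rule ray_in_lazy_walk)
  have w_seq: "coarse_seq G (\<pi> \<circ> w)" using coarse_seq_lazy_walk[OF lazy w_V fibres] .
  have "w (i * M) = b i" for i unfolding w_def using M(2) by simp
  have "range \<sigma> \<subseteq> range (\<pi> \<circ> w)"
  proof
    fix x assume "x \<in> range \<sigma>"
    then obtain i where "x = \<sigma> i" by blast
    then have "x = (\<pi> \<circ> w) (i * M)" using b(2) \<open>w (i * M) = b i\<close> by simp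
    then show "x \<in> range (\<pi> \<circ> w)" by blast
  qed
  then have \<sigma>_w: "coarse_equiv G \<sigma> (\<pi> \<circ> w)" by (rule coarse_equiv_of_range_subset[OF \<sigma> w_seq])
  have "\<rho> \<in> rays_antirays \<Gamma>" using \<rho>(1) unfolding rays_antirays_def by blast
  moreover have "range (\<pi> \<circ> \<rho>) \<subseteq> range (\<pi> \<circ> w)"
    using \<rho>(2) unfolding image_comp[symmetric] by (rule image_mono)
  ultimately have "coarse_equiv G (\<pi> \<circ> \<rho>) (\<pi> \<circ> w)"
    using coarse_seq_ray_antiray w_seq coarse_equiv_of_range_subset by blast
  then have "coarse_equiv G (\<pi> \<circ> \<rho>) \<sigma>" using coarse_equiv_trans coarse_equiv_sym[OF \<sigma>_w] by blast
  with \<rho>(1) show ?thesis by (rule that)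
qed

theorem ends_eqpoll_coarse_ends: "ends \<Gamma> \<approx> coarse_ends G"
proof -
  have "end_equiv \<Gamma> = {(r, s). r \<in> rays_antirays \<Gamma> \<and> s \<in> rays_antirays \<Gamma> \<and>
                              (\<pi> \<circ> r, \<pi> \<circ> s) \<in> {(\<sigma>, \<tau>). coarse_equiv G \<sigma> \<tau>}}"
    using end_equiv_iff by auto
  moreover have "\<exists>r\<in>rays_antirays \<Gamma>. (\<pi> \<circ> r, \<sigma>) \<in> {(\<sigma>, \<tau>). coarse_equiv G \<sigma> \<tau>}"
    if \<sigma>: "coarse_seq G \<sigma>" for \<sigma>
  proof -
    obtain \<rho> where "is_ray \<Gamma> \<rho>" "coarse_equiv G (\<pi> \<circ> \<rho>) \<sigma>"
      using exists_ray_coarse_equiv[OF \<sigma>] by blast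
    then show ?thesis unfolding rays_antirays_def by blast
  qed
  then have "rays_antirays \<Gamma> // {(r, s). r \<in> rays_antirays \<Gamma> \<and> s \<in> rays_antirays \<Gamma> \<and>
                              (\<pi> \<circ> r, \<pi> \<circ> s) \<in> {(\<sigma>, \<tau>). coarse_equiv G \<sigma> \<tau>}}
      \<approx> {\<sigma>. coarse_seq G \<sigma>} // {(\<sigma>, \<tau>). coarse_equiv G \<sigma> \<tau>}"
    using coarse_seq_ray_antiray by (intro quotient_pullback_eqpoll[OF equiv_coarse_equiv]) auto
  ultimately show ?thesis unfolding ends_def coarse_ends_def by simp
qed

end

lemma (in group) right_simple_over_group_self:
  assumes "finite A" "sg_generating_set (carrier G) (mult G) A"
  shows "right_simple_over_group G (carrier G) (mult G) A id"
proof unfold_locales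
  fix v w assume "v \<in> carrier G" "w \<in> carrier G"
  then show "\<exists>c\<in>carrier G. w = v \<otimes> c"
    by (intro bexI[of _ "inv v \<otimes> w"]) (simp_all add: m_assoc[symmetric])
qed (use assms in \<open>auto simp: m_assoc\<close>)

lemma (in group) right_simple_over_group_right_zero_product:
  assumes E: "finite E" "E \<noteq> {}" and right_zero: "\<forall>e\<in>E. \<forall>f\<in>E. multE e f = f"
    and "finite B" "sg_generating_set (carrier G \<times> E) (prod_mult (mult G) multE) B"
  shows "right_simple_over_group G (carrier G \<times> E) (prod_mult (mult G) multE) B fst"
proof unfold_locales
  show "fst ` (carrier G \<times> E) = carrier G" using E(2) by simp
  show "finite {v \<in> carrier G \<times> E. fst v = g}" for g
    by (rule finite_subset[of _ "{g} \<times> E"]) (use E(1) in auto)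
  fix v w assume "v \<in> carrier G \<times> E" "w \<in> carrier G \<times> E"
  then have "(inv fst v \<otimes> fst w, snd w) \<in> carrier G \<times> E"
    and "w = prod_mult (mult G) multE v (inv fst v \<otimes> fst w, snd w)"
    using right_zero by (auto simp: prod_mult_def m_assoc[symmetric])
  then show "\<exists>c\<in>carrier G \<times> E. w = prod_mult (mult G) multE v c" by blast
qed (use assms in \<open>auto simp: prod_mult_def m_assoc\<close>)

theorem mainTheorem10:
  fixes G :: "('g, 'b) monoid_scheme"
    and E :: "'e set" and multE :: "'e \<Rightarrow> 'e \<Rightarrow> 'e"
  assumes "group G"
    and "\<exists>A. finite A \<and> A \<subseteq> carrier G \<and> generate G A = carrier G"
    and "finite E" and "E \<noteq> {}"
    and "\<forall>e\<in>E. \<forall>f\<in>E. multE e f = f"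
    and "finite A" and "sg_generating_set (carrier G) (mult G) A"
    and "finite B" and "sg_generating_set (carrier G \<times> E) (prod_mult (mult G) multE) B"
  shows "ends (right_cayley (carrier G \<times> E) (prod_mult (mult G) multE) B)
           \<approx> ends (right_cayley (carrier G) (mult G) A)"
proof -
  interpret group G by fact
  have "ends (right_cayley (carrier G \<times> E) (prod_mult (mult G) multE) B) \<approx> coarse_ends G"
    using right_simple_over_group_right_zero_product[OF assms(3-5,8,9)]
    by (rule right_simple_over_group.ends_eqpoll_coarse_ends)
  moreover have "ends (right_cayley (carrier G) (mult G) A) \<approx> coarse_ends G"
    using right_simple_over_group_self[OF assms(6,7)]
    by (rule right_simple_over_group.ends_eqpoll_coarse_ends)
  ultimately show ?thesis using eqpoll_sym eqpoll_trans by blast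
qed

end
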